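(* Let $d$ and $q$ be positive integers and let $G$ be a finite (loop-free) graph with maximum degree at most $d$. Put $D := d \cdot \#V(G) - 2 \cdot \#E(G)$. Then there is a $d$-regular graph $G'$ such that (1) $\#V(G') \leq 1 + \max\{3 + D/d,\ 2\lceil d/2 \rceil\} + \#V(G)$, and (2) $\hom(G, H_q) \leq \hom(G', H_q)$.
   Context: $H_q$ is the graph (loops allowed) on vertex set $\{1,2,\dots,q\}$ in which vertices $u,v$ (possibly equal) are adjacent iff $u + v \geq q$. For graphs $G, H$, $\hom(G,H)$ is the number of graph homomorphisms $G \to H$, i.e. maps $\varphi: V(G) \to V(H)$ such that $xy \in E(G)$ implies $\varphi(x)\varphi(y) \in E(H)$. *)

theory Defs
  imports Complex_Main "HOL-Library.FuncSet"
begin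

definition simple_graph :: "'a set \<Rightarrow> ('a \<Rightarrow> 'a \<Rightarrow> bool) \<Rightarrow> bool" where
  "simple_graph V E \<longleftrightarrow> finite V \<and> (\<forall>x y. E x y \<longrightarrow> x \<in> V \<and> y \<in> V)
     \<and> (\<forall>x y. E x y \<longrightarrow> E y x) \<and> (\<forall>x. \<not> E x x)"

definition degree :: "'a set \<Rightarrow> ('a \<Rightarrow> 'a \<Rightarrow> bool) \<Rightarrow> 'a \<Rightarrow> nat" where
  "degree V E v = card {u \<in> V. E v u}"

definition num_edges :: "'a set \<Rightarrow> ('a \<Rightarrow> 'a \<Rightarrow> bool) \<Rightarrow> nat" where
  "num_edges V E = card {{u, v} | u v. u \<in> V \<and> v \<in> V \<and> E u v}"

definition regular :: "nat \<Rightarrow> 'a set \<Rightarrow> ('a \<Rightarrow> 'a \<Rightarrow> bool) \<Rightarrow> bool" where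
  "regular d V E \<longleftrightarrow> (\<forall>v \<in> V. degree V E v = d)"

text \<open>Number of homomorphisms (V,E) \<rightarrow> (W,F); maps are taken extensional
  (undefined outside V), so these correspond exactly to maps V \<rightarrow> W.\<close>
definition hom_count :: "'a set \<Rightarrow> ('a \<Rightarrow> 'a \<Rightarrow> bool) \<Rightarrow> 'b set \<Rightarrow> ('b \<Rightarrow> 'b \<Rightarrow> bool) \<Rightarrow> nat" where
  "hom_count V E W F = card {\<phi> \<in> V \<rightarrow>\<^sub>E W. \<forall>x \<in> V. \<forall>y \<in> V. E x y \<longrightarrow> F (\<phi> x) (\<phi> y)}"

definition Hq_V :: "nat \<Rightarrow> nat set" where "Hq_V q = {1..q}"
definition Hq_E :: "nat \<Rightarrow> nat \<Rightarrow> nat \<Rightarrow> bool" where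
  "Hq_E q u v \<longleftrightarrow> u \<in> {1..q} \<and> v \<in> {1..q} \<and> u + v \<ge> q"

end

theory Submission
  imports Defs
begin

(* Number the vertices of G as 0, ..., n - 1, so that vertex i lacks r i = d - deg i edges and
   the r i sum to D. Choose k > d with D <= d * k and d * k + D even (possible with
   k <= 1 + max (3 + D / d) (2 * ceiling (d / 2))) and add k new vertices. The D missing
   edge-ends are dealt out cyclically to the new vertices, so new vertex w receives
   D div k + [w < D mod k] of them; the new vertices are then joined among themselves by a graph
   in which w has the complementary degree, namely a circulant graph from which a matching of
   consecutive vertices is removed, or to which one is added. Every homomorphism G -> H_q
   extends to the resulting d-regular graph by sending all new vertices to q, which is adjacent
   in H_q to every vertex, itself included. *)

lemma simple_graphD:
  assumes "simple_graph V E"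
  shows "finite V" and "E x y \<Longrightarrow> x \<in> V" and "E x y \<Longrightarrow> y \<in> V"
    and "E x y \<Longrightarrow> E y x" and "\<not> E x x"
  using assms unfolding simple_graph_def by auto

lemma sum_degree_eq_twice_num_edges:
  assumes "simple_graph V E"
  shows "(\<Sum>v\<in>V. degree V E v) = 2 * num_edges V E"
proof -
  note G = simple_graphD[OF assms]
  define P where "P = (SIGMA u:V. {v \<in> V. E u v})"
  define Es where "Es = {{u, v} | u v. u \<in> V \<and> v \<in> V \<and> E u v}"
  define fibre where "fibre e = {p \<in> P. {fst p, snd p} = e}" for e
  have "finite P" unfolding P_def using G(1) by auto
  have "Es = (\<lambda>p. {fst p, snd p}) ` P"
    unfolding Es_def P_def by (auto simp: image_iff; blast)
  then have "finite Es" and P_eq: "P = (\<Union>e\<in>Es. fibre e)"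
    using \<open>finite P\<close> unfolding fibre_def by auto
  have card_fibre: "card (fibre e) = 2" if e: "e \<in> Es" for e
  proof -
    obtain u v where uv: "u \<in> V" "v \<in> V" "E u v" "e = {u, v}"
      using e unfolding Es_def by blast
    then have "u \<noteq> v" using G(5) by auto
    moreover have "fibre e = {(u, v), (v, u)}"
      unfolding fibre_def P_def using uv G(4) \<open>u \<noteq> v\<close> by (auto simp: doubleton_eq_iff)
    ultimately show ?thesis by simp
  qed
  have "(\<Sum>v\<in>V. degree V E v) = card P"
    unfolding P_def degree_def using G(1) by (subst card_SigmaI) auto
  also have "\<dots> = (\<Sum>e\<in>Es. card (fibre e))"
    unfolding P_eq using \<open>finite Es\<close> \<open>finite P\<close>
    by (intro card_UN_disjoint) (auto simp: fibre_def intro: rev_finite_subset)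
  also have "\<dots> = 2 * num_edges V E"
    using card_fibre unfolding num_edges_def Es_def by simp
  finally show ?thesis .
qed

lemma sum_degree_deficiency:
  assumes "simple_graph V E" and "\<forall>v\<in>V. degree V E v \<le> d"
  shows "int (\<Sum>v\<in>V. d - degree V E v) = int d * int (card V) - 2 * int (num_edges V E)"
proof -
  have "int (\<Sum>v\<in>V. d - degree V E v) = (\<Sum>v\<in>V. int d - int (degree V E v))"
    unfolding of_nat_sum using assms(2) by (intro sum.cong) auto
  also have "\<dots> = int d * int (card V) - int (\<Sum>v\<in>V. degree V E v)"
    by (simp add: sum_subtractf)
  finally show ?thesis
    unfolding sum_degree_eq_twice_num_edges[OF assms(1)] by simp
qed

lemma simple_graph_pullback:
  assumes "bij_betw g U V" and "simple_graph V E"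
  shows "simple_graph U (\<lambda>i j. i \<in> U \<and> j \<in> U \<and> E (g i) (g j))"
proof -
  have "finite U" using bij_betw_finite[OF assms(1)] simple_graphD(1)[OF assms(2)] by simp
  then show ?thesis
    using simple_graphD(4,5)[OF assms(2)] unfolding simple_graph_def by auto
qed

lemma degree_pullback:
  assumes "bij_betw g U V" and "i \<in> U"
  shows "degree U (\<lambda>i j. i \<in> U \<and> j \<in> U \<and> E (g i) (g j)) i = degree V E (g i)"
proof -
  have "degree U (\<lambda>i j. i \<in> U \<and> j \<in> U \<and> E (g i) (g j)) i = card {j \<in> U. E (g i) (g j)}"
    unfolding degree_def using assms(2) by simp
  also have "\<dots> = card (g ` {j \<in> U. E (g i) (g j)})"
    using assms(1) unfolding bij_betw_def by (auto intro: card_image[symmetric] inj_on_subset)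
  also have "g ` {j \<in> U. E (g i) (g j)} = {v \<in> V. E (g i) v}"
    using assms(1) unfolding bij_betw_def by auto
  finally show ?thesis unfolding degree_def .
qed

lemma simple_graph_xor:
  assumes "simple_graph U G" and "simple_graph U M"
  shows "simple_graph U (\<lambda>x y. G x y \<noteq> M x y)"
  using assms unfolding simple_graph_def by blast

lemma degree_xor_unique_partner:
  assumes "finite U" and "p \<in> U" and "\<And>v. M u v \<longleftrightarrow> v = p"
  shows "degree U (\<lambda>x y. G x y \<noteq> M x y) u
           = (if G u p then degree U G u - 1 else Suc (degree U G u))"
proof -
  define N where "N = {v \<in> U. G u v}"
  have "finite N" and "p \<in> N \<longleftrightarrow> G u p" unfolding N_def using assms(1,2) by auto
  have "degree U (\<lambda>x y. G x y \<noteq> M x y) u = card (if G u p then N - {p} else insert p N)"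
    unfolding degree_def N_def using assms(2,3) by (intro arg_cong[where f = card]) auto
  also have "\<dots> = (if G u p then card N - 1 else Suc (card N))"
    using \<open>finite N\<close> \<open>p \<in> N \<longleftrightarrow> G u p\<close> by simp
  finally show ?thesis unfolding degree_def N_def .
qed

lemma image_add_nat: "(+) n ` W = {y. n \<le> y \<and> y - n \<in> W}" for n :: nat
  by (auto simp: image_iff) (metis le_add_diff_inverse)

definition glue ::
  "nat \<Rightarrow> nat \<Rightarrow> (nat \<Rightarrow> nat \<Rightarrow> bool) \<Rightarrow> (nat \<Rightarrow> nat \<Rightarrow> bool) \<Rightarrow> (nat \<Rightarrow> nat \<Rightarrow> bool)
     \<Rightarrow> nat \<Rightarrow> nat \<Rightarrow> bool" where
  "glue n k A S B x y \<longleftrightarrow>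
       (x < n \<and> y < n \<and> A x y)
     \<or> (x < n \<and> n \<le> y \<and> y < n + k \<and> S x (y - n))
     \<or> (y < n \<and> n \<le> x \<and> x < n + k \<and> S y (x - n))
     \<or> (n \<le> x \<and> n \<le> y \<and> B (x - n) (y - n))"

lemma simple_graph_glue:
  assumes "simple_graph {0..<n} A" and "simple_graph {0..<k} B"
  shows "simple_graph {0..<n + k} (glue n k A S B)"
proof -
  note A = simple_graphD[OF assms(1)] and B = simple_graphD[OF assms(2)]
  have "x < n + k" "y < n + k" if "glue n k A S B x y" for x y
    using that A(2,3)[of x y] B(2,3)[of "x - n" "y - n"] unfolding glue_def by auto
  moreover have "glue n k A S B y x" if "glue n k A S B x y" for x y
    using that A(4) B(4) unfolding glue_def by auto
  moreover have "\<not> glue n k A S B x x" for x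
    using A(5) B(5) unfolding glue_def by auto
  ultimately show ?thesis unfolding simple_graph_def by auto
qed

lemma degree_glue_left:
  assumes "x < n"
  shows "degree {0..<n + k} (glue n k A S B) x = degree {0..<n} A x + card {w. w < k \<and> S x w}"
proof -
  have neighbours: "{y \<in> {0..<n + k}. glue n k A S B x y}
          = {y \<in> {0..<n}. A x y} \<union> (+) n ` {w. w < k \<and> S x w}"
  proof -
    have "glue n k A S B x y \<longleftrightarrow> (y < n \<and> A x y) \<or> (n \<le> y \<and> y < n + k \<and> S x (y - n))" for y
      using assms unfolding glue_def by auto
    then show ?thesis unfolding image_add_nat by fastforce
  qed
  show ?thesis
    unfolding degree_def neighbours by (subst card_Un_disjoint) (auto simp: card_image)
qed

lemma degree_glue_right:
  assumes "simple_graph {0..<k} B" and "w < k"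
  shows "degree {0..<n + k} (glue n k A S B) (n + w)
           = card {i. i < n \<and> S i w} + degree {0..<k} B w"
proof -
  have neighbours: "{y \<in> {0..<n + k}. glue n k A S B (n + w) y}
          = {i. i < n \<and> S i w} \<union> (+) n ` {v \<in> {0..<k}. B w v}"
  proof -
    have "glue n k A S B (n + w) y \<longleftrightarrow> (y < n \<and> S y w) \<or> (n \<le> y \<and> B w (y - n))" for y
      using assms(2) unfolding glue_def by auto
    then show ?thesis
      unfolding image_add_nat using simple_graphD(3)[OF assms(1)] by fastforce
  qed
  show ?thesis
    unfolding degree_def neighbours by (subst card_Un_disjoint) (auto simp: card_image)
qed

lemma inj_on_mod_interval:
  fixes k :: nat
  assumes "m \<le> k"
  shows "inj_on (\<lambda>p. p mod k) {a..<a + m}"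
proof -
  have "p = p'" if "p \<in> {a..<a + m}" "p' \<in> {a..<a + m}" "p mod k = p' mod k" "p' \<le> p" for p p'
  proof -
    have "k dvd p - p'" using that(3,4) mod_eq_dvd_iff_nat by blast
    moreover have "p - p' < k" using that(1,2) assms by auto
    ultimately show ?thesis using that(4) by auto
  qed
  then show ?thesis unfolding inj_on_def by (metis nle_le)
qed

definition cyclic_dist :: "nat \<Rightarrow> nat \<Rightarrow> nat \<Rightarrow> nat" where
  "cyclic_dist k u v = min (nat \<bar>int u - int v\<bar>) (k - nat \<bar>int u - int v\<bar>)"

lemma cyclic_dist_commute: "cyclic_dist k u v = cyclic_dist k v u"
  unfolding cyclic_dist_def by (simp add: abs_minus_commute)

lemma cyclic_dist_self: "cyclic_dist k u u = 0"
  unfolding cyclic_dist_def by simp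

lemma cyclic_dist_Suc: "Suc u < k \<Longrightarrow> cyclic_dist k u (Suc u) = 1"
  unfolding cyclic_dist_def by simp

lemma cyclic_dist_rotate:
  assumes "u < k" and "s < k"
  shows "cyclic_dist k u ((u + s) mod k) = min s (k - s)"
proof (cases "u + s < k")
  case True
  then show ?thesis unfolding cyclic_dist_def by simp
next
  case False
  then have "(u + s) mod k = u + s - k" using assms by (simp add: mod_if)
  then show ?thesis unfolding cyclic_dist_def using False assms by (simp add: min.commute)
qed

definition circulant :: "nat \<Rightarrow> nat \<Rightarrow> nat \<Rightarrow> nat \<Rightarrow> nat \<Rightarrow> bool" where
  "circulant k a b u v \<longleftrightarrow> u < k \<and> v < k \<and> a \<le> cyclic_dist k u v \<and> cyclic_dist k u v \<le> b"

lemma simple_graph_circulant: "0 < a \<Longrightarrow> simple_graph {0..<k} (circulant k a b)"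
  unfolding simple_graph_def circulant_def
  by (auto simp: cyclic_dist_self cyclic_dist_commute)

lemma degree_circulant:
  assumes "u < k"
  shows "degree {0..<k} (circulant k a b) u
           = card {s. s < k \<and> a \<le> min s (k - s) \<and> min s (k - s) \<le> b}"
proof -
  define rot where "rot s = (u + s) mod k" for s
  have "inj_on rot {0..<k}"
  proof (rule inj_onI)
    fix s t assume "s \<in> {0..<k}" "t \<in> {0..<k}" "rot s = rot t"
    then have "u + s = u + t"
      using inj_onD[OF inj_on_mod_interval[of k k u], of "u + s" "u + t"] unfolding rot_def by auto
    then show "s = t" by simp
  qed
  moreover have "rot ` {0..<k} \<subseteq> {0..<k}" unfolding rot_def using assms by auto
  ultimately have rot_onto: "rot ` {0..<k} = {0..<k}"
    by (simp add: endo_inj_surj)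
  define T where "T = {s. s < k \<and> a \<le> min s (k - s) \<and> min s (k - s) \<le> b}"
  have "{v \<in> {0..<k}. circulant k a b u v} = rot ` T"
  proof -
    have "{v \<in> {0..<k}. circulant k a b u v} = {v \<in> rot ` {0..<k}. circulant k a b u v}"
      using rot_onto by simp
    also have "\<dots> = rot ` T"
      unfolding T_def circulant_def rot_def using assms cyclic_dist_rotate[OF assms] by auto
    finally show ?thesis .
  qed
  moreover have "inj_on rot T"
    using \<open>inj_on rot {0..<k}\<close> by (rule inj_on_subset) (auto simp: T_def)
  ultimately show ?thesis unfolding degree_def T_def[symmetric] by (simp add: card_image)
qed

lemma card_cyclic_band:
  assumes "0 < a" and "2 * b < k"
  shows "card {s. s < k \<and> a \<le> min s (k - s) \<and> min s (k - s) \<le> b} = 2 * (b + 1 - a)"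
proof -
  have "{s. s < k \<and> a \<le> min s (k - s) \<and> min s (k - s) \<le> b} = {a..b} \<union> {k - b..k - a}"
    using assms unfolding min_def by auto
  moreover have "{a..b} \<inter> {k - b..k - a} = {}" using assms by auto
  ultimately show ?thesis using assms by (simp add: card_Un_disjoint)
qed

lemma card_cyclic_band_half:
  assumes "2 * b = k"
  shows "card {s. s < k \<and> 1 \<le> min s (k - s) \<and> min s (k - s) \<le> b} = k - 1"
proof -
  have "{s. s < k \<and> 1 \<le> min s (k - s) \<and> min s (k - s) \<le> b} = {1..<k}"
    using assms unfolding min_def by auto
  then show ?thesis by simp
qed

(* The matching {lo, lo + 1}, {lo + 2, lo + 3}, ... on the interval [lo, hi). *)
definition path_matching :: "nat \<Rightarrow> nat \<Rightarrow> nat \<Rightarrow> nat \<Rightarrow> bool" where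
  "path_matching lo hi u v \<longleftrightarrow> lo \<le> u \<and> u < hi \<and> lo \<le> v \<and> v < hi
     \<and> (if even (u - lo) then v = Suc u else u = Suc v)"

lemma simple_graph_path_matching:
  assumes "hi \<le> k"
  shows "simple_graph {0..<k} (path_matching lo hi)"
  using assms unfolding simple_graph_def path_matching_def
  by (auto split: if_splits simp: Suc_diff_le)

lemma path_matching_cyclic_dist:
  assumes "path_matching lo hi u v" and "hi \<le> k"
  shows "cyclic_dist k u v = 1"
proof (cases "even (u - lo)")
  case True
  then have "v = Suc u" "Suc u < k" using assms unfolding path_matching_def by auto
  then show ?thesis by (simp add: cyclic_dist_Suc)
next
  case False
  then have "u = Suc v" "Suc v < k" using assms unfolding path_matching_def by auto
  then show ?thesis by (simp add: cyclic_dist_Suc cyclic_dist_commute)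
qed

lemma path_matching_partner:
  assumes "even (hi - lo)" and "lo \<le> u" and "u < hi"
  obtains p where "\<And>v. path_matching lo hi u v \<longleftrightarrow> v = p"
proof (cases "even (u - lo)")
  case True
  then have "Suc u < hi"
    using assms by presburger
  then have "path_matching lo hi u v \<longleftrightarrow> v = Suc u" for v
    using True assms unfolding path_matching_def by auto
  then show ?thesis by (rule that)
next
  case False
  then have "lo < u" using assms(2) by (cases "u = lo") auto
  then have "path_matching lo hi u v \<longleftrightarrow> v = u - 1" for v
    using False assms unfolding path_matching_def by auto
  then show ?thesis by (rule that)
qed

lemma degree_circulant_xor_path_matching:
  assumes "hi \<le> k" and "even (hi - lo)" and "lo \<le> u" and "u < hi"
  shows "degree {0..<k} (\<lambda>x y. circulant k a b x y \<noteq> path_matching lo hi x y) u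
           = (if a \<le> 1 \<and> 1 \<le> b then degree {0..<k} (circulant k a b) u - 1
              else Suc (degree {0..<k} (circulant k a b) u))"
proof -
  obtain p where p: "\<And>v. path_matching lo hi u v \<longleftrightarrow> v = p"
    using path_matching_partner[OF assms(2-4)] by blast
  then have "path_matching lo hi u p" by simp
  then have "p < k" and "cyclic_dist k u p = 1"
    using assms(1) path_matching_cyclic_dist unfolding path_matching_def by auto
  then have "circulant k a b u p \<longleftrightarrow> a \<le> 1 \<and> 1 \<le> b"
    using assms unfolding circulant_def by auto
  with degree_xor_unique_partner[of "{0..<k}" p "path_matching lo hi" u] p \<open>p < k\<close>
  show ?thesis by simp
qed

lemma degree_circulant_xor_path_matching_outside:
  assumes "\<not> (lo \<le> u \<and> u < hi)"
  shows "degree U (\<lambda>x y. circulant k a b x y \<noteq> path_matching lo hi x y) u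
           = degree U (circulant k a b) u"
proof -
  have "\<not> path_matching lo hi u v" for v using assms unfolding path_matching_def by auto
  then show ?thesis unfolding degree_def by simp
qed

lemma degree_circulant_remove_matching:
  assumes "c < k" and "even c \<or> c = k - 1" and "even \<rho>" and "\<rho> < k"
    and "0 < \<rho> \<Longrightarrow> 0 < c" and "u < k"
  shows "degree {0..<k} (\<lambda>x y. circulant k 1 ((c + 1) div 2) x y \<noteq> path_matching 0 \<rho> x y) u
           = c - (if u < \<rho> then 1 else 0)"
proof -
  define b where "b = (c + 1) div 2"
  have circ: "degree {0..<k} (circulant k 1 b) u = c"
  proof (cases "even c")
    case True
    then have "2 * b < k" unfolding b_def using assms(1) by auto
    then show ?thesis
      using degree_circulant[OF assms(6)] card_cyclic_band[of 1 b k] True unfolding b_def by auto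
  next
    case False
    then have "2 * b = k" "c = k - 1" unfolding b_def using assms(1,2) by auto
    then show ?thesis
      using degree_circulant[OF assms(6), of 1 b] card_cyclic_band_half[of b k] by (simp only:)
  qed
  show ?thesis
  proof (cases "u < \<rho>")
    case True
    then have "1 \<le> b" unfolding b_def using assms(5) by auto
    then show ?thesis
      using degree_circulant_xor_path_matching[of \<rho> k 0 u 1 b] assms(3,4) True circ
      unfolding b_def by simp
  next
    case False
    then show ?thesis
      using degree_circulant_xor_path_matching_outside[of 0 u \<rho>] circ unfolding b_def by simp
  qed
qed

lemma degree_circulant_add_matching:
  assumes "odd c" and "c + 1 < k" and "even (k - \<rho>)" and "u < k"
  shows "degree {0..<k} (\<lambda>x y. circulant k 2 ((c + 1) div 2) x y \<noteq> path_matching \<rho> k x y) u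
           = c - (if u < \<rho> then 1 else 0)"
proof -
  define b where "b = (c + 1) div 2"
  have circ: "degree {0..<k} (circulant k 2 b) u = c - 1"
    using degree_circulant[OF assms(4)] card_cyclic_band[of 2 b k] assms(1,2)
    unfolding b_def by auto
  show ?thesis
  proof (cases "u < \<rho>")
    case True
    then show ?thesis
      using degree_circulant_xor_path_matching_outside[of \<rho> u k] circ unfolding b_def by simp
  next
    case False
    then show ?thesis
      using degree_circulant_xor_path_matching[of k k \<rho> u 2 b] assms circ
      unfolding b_def by (simp add: odd_pos)
  qed
qed

lemma near_regular_graph_exists:
  assumes "c < k" and "\<rho> < k" and "0 < \<rho> \<Longrightarrow> 0 < c" and "even (c * k - \<rho>)"
  obtains B where "simple_graph {0..<k} B"
    and "\<And>u. u < k \<Longrightarrow> degree {0..<k} B u = c - (if u < \<rho> then 1 else 0)"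
proof (cases "even c \<or> c = k - 1")
  case True
  have "\<rho> \<le> c * k"
  proof (cases "\<rho> = 0")
    case False
    then have "k \<le> c * k" using assms(3) by simp
    then show ?thesis using assms(2) by linarith
  qed simp
  moreover have "even (c * k)" using True by (cases "even k") auto
  ultimately have "even \<rho>" using assms(4) by (metis even_add le_add_diff_inverse2)
  show ?thesis
  proof (rule that)
    show "simple_graph {0..<k} (\<lambda>x y. circulant k 1 ((c + 1) div 2) x y \<noteq> path_matching 0 \<rho> x y)"
      using assms(2) by (intro simple_graph_xor simple_graph_circulant simple_graph_path_matching) auto
  qed (use degree_circulant_remove_matching assms True \<open>even \<rho>\<close> in blast)
next
  case False
  then have "odd c" and "c + 1 < k" using assms(1) by auto
  have "c * k - \<rho> = (c - 1) * k + (k - \<rho>)"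
    using \<open>odd c\<close> assms(2) by (cases c) (auto simp: algebra_simps)
  then have "even (k - \<rho>)" using assms(4) \<open>odd c\<close> by simp
  with \<open>odd c\<close> \<open>c + 1 < k\<close> show ?thesis
    by (intro that[of "\<lambda>x y. circulant k 2 ((c + 1) div 2) x y \<noteq> path_matching \<rho> k x y"]
        simple_graph_xor simple_graph_circulant simple_graph_path_matching degree_circulant_add_matching)
      auto
qed

(* The r i stubs of vertex i occupy the positions (sum j<i. r j), ..., (sum j<=i. r j) - 1 of a
   single list, and position p is attached to new vertex p mod k. *)
definition round_robin :: "nat \<Rightarrow> (nat \<Rightarrow> nat) \<Rightarrow> nat \<Rightarrow> nat \<Rightarrow> bool" where
  "round_robin k r i w \<longleftrightarrow> (\<exists>p \<in> {(\<Sum>j<i. r j)..<(\<Sum>j<Suc i. r j)}. p mod k = w)"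

lemma card_round_robin_stubs:
  assumes "r i \<le> k"
  shows "card {w. w < k \<and> round_robin k r i w} = r i"
proof -
  define P where "P = (\<Sum>j<i. r j)"
  have "{w. w < k \<and> round_robin k r i w} = (\<lambda>p. p mod k) ` {P..<P + r i}"
  proof (cases "r i = 0")
    case False
    then have "0 < k" using assms by simp
    then show ?thesis unfolding round_robin_def P_def by auto
  qed (simp add: round_robin_def P_def)
  then show ?thesis using inj_on_mod_interval[OF assms] by (simp add: card_image)
qed

lemma card_round_robin_bin:
  assumes "\<And>i. i < n \<Longrightarrow> r i \<le> k"
  shows "card {i. i < n \<and> round_robin k r i w} = card {p. p < (\<Sum>i<n. r i) \<and> p mod k = w}"
  using assms
proof (induction n)
  case (Suc n)
  define P where "P = (\<Sum>i<n. r i)"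
  define X where "X = {p \<in> {P..<P + r n}. p mod k = w}"
  have "r n \<le> k" using Suc.prems by simp
  have "inj_on (\<lambda>p. p mod k) X"
    by (rule inj_on_subset[OF inj_on_mod_interval[OF \<open>r n \<le> k\<close>, of P]]) (auto simp: X_def)
  then have "card X = card ((\<lambda>p. p mod k) ` X)" by (simp add: card_image)
  also have "\<dots> \<le> card {w}" unfolding X_def by (intro card_mono) auto
  finally have "card X \<le> 1" by simp
  moreover have "X \<noteq> {} \<longleftrightarrow> round_robin k r n w"
    unfolding X_def round_robin_def P_def by auto
  moreover have "finite X" unfolding X_def by simp
  ultimately have card_X: "card X = (if round_robin k r n w then 1 else 0)"
    by (cases "X = {}") (simp_all add: Suc_leI card_gt_0_iff le_antisym)
  have "{p. p < (\<Sum>i<Suc n. r i) \<and> p mod k = w} = {p. p < P \<and> p mod k = w} \<union> X"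
    unfolding X_def P_def by auto
  moreover have "card ({p. p < P \<and> p mod k = w} \<union> X) = card {p. p < P \<and> p mod k = w} + card X"
    using \<open>finite X\<close> by (intro card_Un_disjoint) (auto simp: X_def)
  ultimately have "card {p. p < (\<Sum>i<Suc n. r i) \<and> p mod k = w}
      = card {p. p < P \<and> p mod k = w} + card X"
    by simp
  moreover have "{i. i < Suc n \<and> round_robin k r i w}
      = {i. i < n \<and> round_robin k r i w} \<union> (if round_robin k r n w then {n} else {})"
    by (auto simp: less_Suc_eq)
  then have "card {i. i < Suc n \<and> round_robin k r i w}
      = card {i. i < n \<and> round_robin k r i w} + (if round_robin k r n w then 1 else 0)"
    by (simp add: card_Un_disjoint)
  ultimately show ?case using Suc card_X unfolding P_def by simp
qed simp

lemma card_mod_eq_below: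
  fixes k :: nat
  assumes "w < k"
  shows "card {p. p < m \<and> p mod k = w} = m div k + (if w < m mod k then 1 else 0)"
proof (induction m)
  case (Suc m)
  have "{p. p < Suc m \<and> p mod k = w} = {p. p < m \<and> p mod k = w} \<union> (if m mod k = w then {m} else {})"
    by (auto simp: less_Suc_eq)
  then have "card {p. p < Suc m \<and> p mod k = w}
      = card {p. p < m \<and> p mod k = w} + (if m mod k = w then 1 else 0)"
    by (simp add: card_Un_disjoint)
  moreover have "m mod k < k" using assms by simp
  ultimately show ?case using Suc.IH assms
    by (cases "Suc (m mod k) = k") (auto simp: mod_Suc div_Suc)
qed simp

lemma filler_graph_exists:
  assumes "d < k" and "m \<le> d * k" and "even (d * k + m)"
  obtains B where "simple_graph {0..<k} B"
    and "\<And>w. w < k \<Longrightarrow> m div k + (if w < m mod k then 1 else 0) + degree {0..<k} B w = d"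
proof -
  define c where "c = d - m div k"
  define \<rho> where "\<rho> = m mod k"
  have "0 < k" using assms(1) by simp
  have m_split: "m = m div k * k + \<rho>" unfolding \<rho>_def by simp
  have "m div k \<le> d"
    using div_le_mono[OF assms(2), of k] \<open>0 < k\<close> by simp
  have c_pos: "0 < c" if "0 < \<rho>"
  proof (rule ccontr)
    assume "\<not> 0 < c"
    then have "m div k = d" unfolding c_def using \<open>m div k \<le> d\<close> by simp
    then show False using m_split that assms(2) by (simp add: mult.commute)
  qed
  have "c * k - \<rho> = d * k - m"
    using m_split unfolding c_def by (simp add: diff_mult_distrib)
  moreover have "d * k + m = (d * k - m) + 2 * m" using assms(2) by simp
  ultimately have "even (c * k - \<rho>)" using assms(3) by (metis dvd_add_left_iff dvd_triv_left)
  moreover have "c < k" "\<rho> < k" using assms(1) \<open>0 < k\<close> unfolding c_def \<rho>_def by auto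
  ultimately obtain B where "simple_graph {0..<k} B"
    and deg_B: "\<And>w. w < k \<Longrightarrow> degree {0..<k} B w = c - (if w < \<rho> then 1 else 0)"
    using near_regular_graph_exists c_pos by blast
  moreover have "m div k + (if w < \<rho> then 1 else 0) + degree {0..<k} B w = d" if "w < k" for w
    using deg_B[OF that] \<open>m div k \<le> d\<close> c_pos unfolding c_def by (cases "w < \<rho>") auto
  ultimately show ?thesis using that unfolding \<rho>_def by blast
qed

lemma regular_completion:
  assumes "simple_graph {0..<n} A" and "\<And>i. i < n \<Longrightarrow> degree {0..<n} A i \<le> d" and "d < k"
    and "(\<Sum>i<n. d - degree {0..<n} A i) \<le> d * k"
    and "even (d * k + (\<Sum>i<n. d - degree {0..<n} A i))"
  obtains E' where "simple_graph {0..<n + k} E'" and "regular d {0..<n + k} E'"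
    and "\<And>i j. i < n \<Longrightarrow> j < n \<Longrightarrow> E' i j \<longleftrightarrow> A i j"
proof -
  define r where "r i = d - degree {0..<n} A i" for i
  define m where "m = (\<Sum>i<n. r i)"
  obtain B where B: "simple_graph {0..<k} B"
    and deg_B: "\<And>w. w < k \<Longrightarrow> m div k + (if w < m mod k then 1 else 0) + degree {0..<k} B w = d"
    using filler_graph_exists[OF assms(3)] assms(4,5) unfolding m_def r_def by blast
  define E' where "E' = glue n k A (round_robin k r) B"
  have "degree {0..<n + k} E' x = d" if "x < n + k" for x
  proof (cases "x < n")
    case True
    have "r x \<le> k" using \<open>d < k\<close> unfolding r_def by simp
    then show ?thesis
      using degree_glue_left[OF True] card_round_robin_stubs assms(2)[OF True]
      unfolding E'_def r_def by simp
  next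
    case False
    define w where "w = x - n"
    have "x = n + w" and "w < k" using False that unfolding w_def by auto
    have "card {i. i < n \<and> round_robin k r i w} = m div k + (if w < m mod k then 1 else 0)"
      using card_round_robin_bin[of n r k w] card_mod_eq_below[OF \<open>w < k\<close>, of m] \<open>d < k\<close>
      unfolding m_def r_def by simp
    then show ?thesis
      using degree_glue_right[OF B \<open>w < k\<close>] deg_B[OF \<open>w < k\<close>]
      unfolding E'_def \<open>x = n + w\<close> by simp
  qed
  then have "regular d {0..<n + k} E'" unfolding regular_def by simp
  moreover have "simple_graph {0..<n + k} E'" unfolding E'_def by (rule simple_graph_glue[OF assms(1) B])
  moreover have "E' i j \<longleftrightarrow> A i j" if "i < n" "j < n" for i j
    using that unfolding E'_def glue_def by auto
  ultimately show ?thesis using that by blast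
qed

lemma regular_supergraph:
  assumes "simple_graph V E" and "\<forall>v\<in>V. degree V E v \<le> d" and "d < k"
    and "(\<Sum>v\<in>V. d - degree V E v) \<le> d * k"
    and "even (d * k + (\<Sum>v\<in>V. d - degree V E v))"
  obtains f E' where "simple_graph {0..<card V + k} E'" and "regular d {0..<card V + k} E'"
    and "inj_on f V" and "f ` V \<subseteq> {0..<card V + k}"
    and "\<And>x y. x \<in> V \<Longrightarrow> y \<in> V \<Longrightarrow> E' (f x) (f y) \<longleftrightarrow> E x y"
proof -
  define n where "n = card V"
  obtain g where g: "bij_betw g {0..<n} V"
    using ex_bij_betw_nat_finite[OF simple_graphD(1)[OF assms(1)]] unfolding n_def by blast
  define A where "A i j \<longleftrightarrow> i \<in> {0..<n} \<and> j \<in> {0..<n} \<and> E (g i) (g j)" for i j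
  have deg_A: "degree {0..<n} A i = degree V E (g i)" if "i < n" for i
    unfolding A_def using degree_pullback[OF g] that by simp
  have "(\<Sum>i<n. d - degree {0..<n} A i) = (\<Sum>v\<in>V. d - degree V E v)"
    using sum.reindex_bij_betw[OF g, of "\<lambda>v. d - degree V E v"] deg_A
    by (simp add: atLeast0LessThan)
  moreover have "simple_graph {0..<n} A"
    unfolding A_def by (rule simple_graph_pullback[OF g assms(1)])
  moreover have "degree {0..<n} A i \<le> d" if "i < n" for i
    using deg_A[OF that] assms(2) bij_betwE[OF g] that by simp
  ultimately obtain E' where "simple_graph {0..<n + k} E'" and "regular d {0..<n + k} E'"
    and E'_A: "\<And>i j. i < n \<Longrightarrow> j < n \<Longrightarrow> E' i j \<longleftrightarrow> A i j"
    using regular_completion[of n A d k] assms(3-5) by auto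
  define f where "f = inv_into {0..<n} g"
  have f_V: "f x < n" and g_f: "g (f x) = x" if "x \<in> V" for x
    using that g inv_into_into[of x g "{0..<n}"] f_inv_into_f[of x g "{0..<n}"]
    unfolding f_def bij_betw_def by auto
  have "inj_on f V" using g unfolding f_def bij_betw_def by (simp add: inj_on_inv_into)
  moreover have "E' (f x) (f y) \<longleftrightarrow> E x y" if "x \<in> V" "y \<in> V" for x y
    using that E'_A f_V g_f unfolding A_def by simp
  moreover have "f ` V \<subseteq> {0..<n + k}" using f_V by (auto dest!: f_V)
  ultimately show ?thesis
    using that \<open>simple_graph {0..<n + k} E'\<close> \<open>regular d {0..<n + k} E'\<close> unfolding n_def by blast
qed

lemma two_ceiling_half: "2 * real_of_int \<lceil>real d / 2\<rceil> = real (d + d mod 2)"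
proof -
  have "\<lceil>real d / 2\<rceil> = int ((d + 1) div 2)" by linarith
  moreover have "2 * ((d + 1) div 2) = d + d mod 2" by presburger
  ultimately show ?thesis by (metis of_int_of_nat_eq of_nat_mult of_nat_numeral)
qed

lemma completion_size_exists:
  fixes d m :: nat
  assumes "0 < d" and "odd d \<or> even m"
  obtains k where "d < k" and "m \<le> d * k" and "even (d * k + m)"
    and "real k \<le> 1 + max (3 + real m / real d) (2 * real_of_int \<lceil>real d / 2\<rceil>)"
proof -
  define k0 where "k0 = max d (m div d) + 1"
  define k where "k = (if even (d * k0 + m) then k0 else k0 + 1)"
  have k: "even (d * k + m) \<and> (k = k0 \<or> odd d \<and> k = k0 + 1)"
  proof (cases "even (d * k0 + m)")
    case False
    then have "odd d" using assms(2) by auto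
    moreover have "d * (k0 + 1) + m = (d * k0 + m) + d" by simp
    ultimately show ?thesis using False unfolding k_def by simp
  qed (simp add: k_def)
  have "m = d * (m div d) + m mod d" by simp
  moreover have "m mod d < d" using assms(1) by simp
  ultimately have "m < d * (m div d) + d" by linarith
  also have "\<dots> = d * (m div d + 1)" by simp
  also have "\<dots> \<le> d * k" using k unfolding k0_def by (intro mult_le_mono2) auto
  finally have "m \<le> d * k" by simp
  moreover have "d < k" using k unfolding k0_def by auto
  moreover have "real k \<le> 1 + max (3 + real m / real d) (2 * real_of_int \<lceil>real d / 2\<rceil>)"
  proof (cases "m div d \<le> d")
    case True
    then have "k \<le> 1 + d + d mod 2" using k unfolding k0_def by (auto simp: odd_iff_mod_2_eq_one)
    then show ?thesis unfolding two_ceiling_half by linarith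
  next
    case False
    then have "k \<le> m div d + 2" using k unfolding k0_def by auto
    moreover have "real (m div d) \<le> real m / real d" by (rule of_nat_div_le_of_nat)
    ultimately show ?thesis by linarith
  qed
  ultimately show ?thesis using k that by blast
qed

lemma hom_count_le_extension:
  assumes "finite V'" and "finite W" and "inj_on f V" and "f ` V \<subseteq> V'"
    and "\<And>x y. x \<in> V \<Longrightarrow> y \<in> V \<Longrightarrow> E' (f x) (f y) \<Longrightarrow> E x y"
    and "w \<in> W" and "\<And>u. u \<in> W \<Longrightarrow> F w u \<and> F u w"
  shows "hom_count V E W F \<le> hom_count V' E' W F"
proof -
  define H where "H = {\<phi> \<in> V \<rightarrow>\<^sub>E W. \<forall>x \<in> V. \<forall>y \<in> V. E x y \<longrightarrow> F (\<phi> x) (\<phi> y)}"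
  define H' where "H' = {\<psi> \<in> V' \<rightarrow>\<^sub>E W. \<forall>x \<in> V'. \<forall>y \<in> V'. E' x y \<longrightarrow> F (\<psi> x) (\<psi> y)}"
  define ext where "ext \<phi> = (\<lambda>x \<in> V'. if x \<in> f ` V then \<phi> (inv_into V f x) else w)" for \<phi>
  have ext_f: "ext \<phi> (f x) = \<phi> x" if "x \<in> V" for \<phi> x
    using that assms(3,4) by (auto simp: ext_def)
  have "ext \<phi> \<in> H'" if "\<phi> \<in> H" for \<phi>
  proof -
    have "ext \<phi> \<in> V' \<rightarrow>\<^sub>E W"
      using that assms(3,6) unfolding H_def ext_def by (auto simp: PiE_iff)
    moreover have "F (ext \<phi> x) (ext \<phi> y)" if "x \<in> V'" "y \<in> V'" "E' x y" for x y
    proof (cases "x \<in> f ` V \<and> y \<in> f ` V")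
      case True
      then obtain x0 y0 where "x0 \<in> V" "y0 \<in> V" "x = f x0" "y = f y0" by blast
      then have "F (\<phi> x0) (\<phi> y0)" using \<open>\<phi> \<in> H\<close> \<open>E' x y\<close> assms(5) unfolding H_def by blast
      then show ?thesis using ext_f \<open>x0 \<in> V\<close> \<open>y0 \<in> V\<close> \<open>x = f x0\<close> \<open>y = f y0\<close> by simp
    next
      case False
      then have "ext \<phi> x = w \<or> ext \<phi> y = w" using that(1,2) unfolding ext_def by auto
      moreover have "ext \<phi> x \<in> W" "ext \<phi> y \<in> W" using \<open>ext \<phi> \<in> V' \<rightarrow>\<^sub>E W\<close> that(1,2) by auto
      ultimately show ?thesis using assms(7) by auto
    qed
    ultimately show ?thesis unfolding H'_def by blast
  qed
  moreover have "inj_on ext H"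
  proof (rule inj_onI)
    fix \<phi>1 \<phi>2 assume "\<phi>1 \<in> H" "\<phi>2 \<in> H" "ext \<phi>1 = ext \<phi>2"
    then have "\<phi>1 x = \<phi>2 x" if "x \<in> V" for x using ext_f[OF that] by metis
    then show "\<phi>1 = \<phi>2" using \<open>\<phi>1 \<in> H\<close> \<open>\<phi>2 \<in> H\<close> unfolding H_def by (intro PiE_ext) auto
  qed
  moreover have "finite H'"
  proof (rule finite_subset)
    show "H' \<subseteq> V' \<rightarrow>\<^sub>E W" unfolding H'_def by blast
    show "finite (V' \<rightarrow>\<^sub>E W)" using assms(1,2) by (intro finite_PiE)
  qed
  ultimately have "card H \<le> card H'" by (intro card_inj_on_le) auto
  then show ?thesis unfolding hom_count_def H_def H'_def .
qed

theorem lemma3p4: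
  fixes d q :: nat and V :: "'a set" and E :: "'a \<Rightarrow> 'a \<Rightarrow> bool"
  assumes "d > 0" and "q > 0"
    and "simple_graph V E"
    and "\<forall>v \<in> V. degree V E v \<le> d"
  defines "D \<equiv> int d * int (card V) - 2 * int (num_edges V E)"
  shows "\<exists>(V' :: nat set) E'. simple_graph V' E' \<and> regular d V' E'
     \<and> real (card V') \<le> 1 + max (3 + real_of_int D / real d) (2 * real_of_int (ceiling (real d / 2))) + real (card V)
     \<and> hom_count V E (Hq_V q) (Hq_E q) \<le> hom_count V' E' (Hq_V q) (Hq_E q)"
proof -
  define m where "m = (\<Sum>v\<in>V. d - degree V E v)"
  have "int m = D" unfolding m_def D_def by (rule sum_degree_deficiency[OF assms(3,4)])
  then have "m + 2 * num_edges V E = d * card V"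
    unfolding D_def by (simp only: of_nat_eq_iff[symmetric, where 'a = int]) simp
  then have "odd d \<or> even m" by (metis dvd_add_left_iff dvd_mult2 dvd_triv_left)
  then obtain k where "d < k" and "m \<le> d * k" and "even (d * k + m)"
    and k_bound: "real k \<le> 1 + max (3 + real m / real d) (2 * real_of_int \<lceil>real d / 2\<rceil>)"
    by (rule completion_size_exists[OF assms(1)])
  obtain f E' where "simple_graph {0..<card V + k} E'" and "regular d {0..<card V + k} E'"
    and f: "inj_on f V" "f ` V \<subseteq> {0..<card V + k}"
      "\<And>x y. x \<in> V \<Longrightarrow> y \<in> V \<Longrightarrow> E' (f x) (f y) \<longleftrightarrow> E x y"
    using \<open>d < k\<close> \<open>m \<le> d * k\<close> \<open>even (d * k + m)\<close> unfolding m_def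
    by (rule regular_supergraph[OF assms(3,4)]) blast
  have "hom_count V E (Hq_V q) (Hq_E q) \<le> hom_count {0..<card V + k} E' (Hq_V q) (Hq_E q)"
    by (rule hom_count_le_extension[OF _ _ f(1,2), where w = q])
      (use f(3) assms(2) in \<open>auto simp: Hq_V_def Hq_E_def\<close>)
  moreover have "real (card {0..<card V + k})
      \<le> 1 + max (3 + real_of_int D / real d) (2 * real_of_int \<lceil>real d / 2\<rceil>) + real (card V)"
    using k_bound unfolding \<open>int m = D\<close>[symmetric] by simp
  ultimately show ?thesis
    using \<open>simple_graph {0..<card V + k} E'\<close> \<open>regular d {0..<card V + k} E'\<close> by blast
qed

end
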